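(* In the finite element setting described in the context, let each element mass matrix $M_e$ be symmetric positive definite, fix an integer $0<r<m$ and a constant $\alpha>0$, and for each element define $$\overline{M}_e=M_e+\alpha\,V_eV_e^T,\qquad V_e=M_eU_{e,2},$$ where $U_{e,2}\in\mathbb{R}^{m\times r}$ has as columns $M_e$-orthonormal eigenvectors of $(K_e,M_e)$ associated with its $r$ largest eigenvalues $\lambda_{m-r+1}(K_e,M_e),\dots,\lambda_m(K_e,M_e)$. Let $M=\sum_eL_e^TM_eL_e$ and $\overline{M}=\sum_eL_e^T\overline{M}_eL_e$. Then for all $i=1,\dots,n$, $$1\le\frac{\omega_i}{\overline{\omega}_i}\le\sqrt{1+\alpha},$$ where $\omega_i=\sqrt{\lambda_i(K,M)}$ and $\overline{\omega}_i=\sqrt{\lambda_i(K,\overline{M})}$.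
   Context: Finite element setting: there are $n$ global degrees of freedom and $N$ elements, each with $m$ local degrees of freedom. For each element $e$, $L_e\in\mathbb{R}^{m\times n}$ satisfies $L_e^T=[\mathbf{e}_{i_1},\dots,\mathbf{e}_{i_m}]$ for distinct indices $i_1,\dots,i_m$ (columns of $I_n$), and every global index appears for at least one element. Element matrices are assembled as $A=\sum_{e=1}^N L_e^TA_eL_e$. The global stiffness matrix is $K=\sum_e L_e^TK_eL_e$ with each $K_e$ symmetric positive semidefinite, and $K$ is assumed symmetric positive definite. Generalized eigenvalues $\lambda_1(A,B)\le\dots\le\lambda_k(A,B)$ of a pair ($A$ symmetric, $B$ symmetric positive definite) are numbered in ascending order; "$M_e$-orthonormal" means $U_{e,2}^TM_eU_{e,2}=I_r$. *)

theory Defs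
  imports "Jordan_Normal_Form.Determinant" "HOL-Computational_Algebra.Polynomial"
    "HOL-Library.Multiset"
begin

definition sym_mat :: "real mat \<Rightarrow> bool" where
  "sym_mat A \<longleftrightarrow> transpose_mat A = A"

definition psd_mat :: "nat \<Rightarrow> real mat \<Rightarrow> bool" where
  "psd_mat k A \<longleftrightarrow> A \<in> carrier_mat k k \<and> sym_mat A \<and>
     (\<forall>x \<in> carrier_vec k. x \<bullet> (A *\<^sub>v x) \<ge> 0)"

definition pd_mat :: "nat \<Rightarrow> real mat \<Rightarrow> bool" where
  "pd_mat k A \<longleftrightarrow> A \<in> carrier_mat k k \<and> sym_mat A \<and>
     (\<forall>x \<in> carrier_vec k. x \<noteq> 0\<^sub>v k \<longrightarrow> x \<bullet> (A *\<^sub>v x) > 0)"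

definition gen_char_poly :: "real mat \<Rightarrow> real mat \<Rightarrow> real poly" where
  "gen_char_poly A B = det (map_mat (\<lambda>a. [:a:]) A - map_mat (\<lambda>b. [:0, b:]) B)"

text \<open>k-th generalized eigenvalue (1-based, ascending, with multiplicity).\<close>
definition gen_eig :: "real mat \<Rightarrow> real mat \<Rightarrow> nat \<Rightarrow> real" where
  "gen_eig A B k = sorted_list_of_multiset (proots (gen_char_poly A B)) ! (k - 1)"

definition restr_mat :: "nat \<Rightarrow> nat \<Rightarrow> (nat \<Rightarrow> nat) \<Rightarrow> real mat" where
  "restr_mat m n idx = mat m n (\<lambda>(a, b). if b = idx a then 1 else 0)"

definition assemble :: "nat \<Rightarrow> nat \<Rightarrow> (nat \<Rightarrow> real mat) \<Rightarrow> (nat \<Rightarrow> real mat) \<Rightarrow> real mat" where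
  "assemble n N L A = mat n n (\<lambda>(i, j). \<Sum>e<N. (transpose_mat (L e) * A e * L e) $$ (i, j))"

end

(*
  Assembling the element bounds M_e <= Mbar_e <= (1 + alpha) M_e in the Loewner order gives
  M <= Mbar <= (1 + alpha) M; the upper element bound is Bessel's inequality for the
  M_e-orthonormal columns of U_e. By Courant--Fischer, lambda_i(K, B) <= c lambda_i(K, A) whenever
  A <= c B, so lambda_i(K, Mbar) <= lambda_i(K, M) <= (1 + alpha) lambda_i(K, Mbar), and square
  roots finish the argument. Since the eigenvalues of the pencil are defined as the roots of
  det (K - x M), Courant--Fischer is proved through a simultaneous diagonalization of (K, M),
  which rests on the spectral theorem for real symmetric matrices.
*)

theory Submission
  imports Defs "Jordan_Normal_Form.Char_Poly"
begin

section \<open>Congruences and quadratic forms\<close>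

lemma scalar_prod_self_pos:
  fixes v :: "real vec"
  assumes "v \<in> carrier_vec n" and "v \<noteq> 0\<^sub>v n"
  shows "v \<bullet> v > 0"
  using conjugate_square_greater_0_vec[OF assms(1)] assms(2) by simp

lemma transpose_mat_diag [simp]: "transpose_mat (mat_diag n d) = mat_diag n d"
  by (rule eq_matI) (auto simp: mat_diag_def)

lemma det_mat_diag: "det (mat_diag n d) = (\<Prod>i\<leftarrow>[0..<n]. d i)"
proof -
  have "upper_triangular (mat_diag n d)" unfolding upper_triangular_def mat_diag_def by auto
  hence "det (mat_diag n d) = prod_list (diag_mat (mat_diag n d))"
    by (rule det_upper_triangular[OF _ mat_diag_dim])
  also have "diag_mat (mat_diag n d) = map d [0..<n]"
    unfolding diag_mat_def mat_diag_def by (rule map_cong) auto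
  finally show ?thesis by simp
qed

lemma mat_diag_mult_vec:
  assumes "x \<in> carrier_vec n"
  shows "mat_diag n d *\<^sub>v x = vec n (\<lambda>i. d i * x $ i)"
proof (rule eq_vecI)
  fix i assume "i < dim_vec (vec n (\<lambda>i. d i * x $ i))"
  hence i: "i < n" by simp
  have "(mat_diag n d *\<^sub>v x) $ i = (\<Sum>k = 0..<n. (if i = k then d k else 0) * x $ k)"
    using i assms by (auto simp: mat_diag_def scalar_prod_def)
  also have "\<dots> = (\<Sum>k = 0..<n. if i = k then d k * x $ k else 0)"
    by (rule sum.cong) auto
  finally show "(mat_diag n d *\<^sub>v x) $ i = vec n (\<lambda>i. d i * x $ i) $ i" using i by simp
qed (simp add: mat_diag_def)

lemma sym_mat_congruence:
  fixes P S :: "real mat"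
  assumes P: "P \<in> carrier_mat n k" and S: "S \<in> carrier_mat n n" and sym: "sym_mat S"
  shows "sym_mat (transpose_mat P * S * P)"
proof -
  have "transpose_mat (transpose_mat P * S * P) = transpose_mat P * transpose_mat (transpose_mat P * S)"
    using P S by (intro transpose_mult[of _ k n]) auto
  also have "transpose_mat (transpose_mat P * S) = transpose_mat S * P"
    using P S by (subst transpose_mult[of _ k n]) auto
  finally show ?thesis using P S sym unfolding sym_mat_def by simp
qed

lemma congruence_mult:
  fixes T F S :: "'a :: comm_semiring_1 mat"
  assumes T: "T \<in> carrier_mat n n" and F: "F \<in> carrier_mat n n" and S: "S \<in> carrier_mat n n"
  shows "transpose_mat (T * F) * S * (T * F) = transpose_mat F * (transpose_mat T * S * T) * F"
  using T F S by (simp add: transpose_mult[OF T F] assoc_mult_mat[of _ n n _ n _ n])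

lemma congruence_index:
  fixes P A :: "real mat"
  assumes P: "P \<in> carrier_mat n k" and A: "A \<in> carrier_mat n n" and i: "i < k" and j: "j < k"
  shows "(transpose_mat P * A * P) $$ (i,j) = col P i \<bullet> (A *\<^sub>v col P j)"
proof -
  have "transpose_mat P * A * P = transpose_mat P * (A * P)" using P A by simp
  thus ?thesis using P A i j col_mult2[OF A P j] by simp
qed

lemma quad_form_congruence:
  fixes P A :: "real mat"
  assumes P: "P \<in> carrier_mat m n" and A: "A \<in> carrier_mat m m" and x: "x \<in> carrier_vec n"
  shows "x \<bullet> ((transpose_mat P * A * P) *\<^sub>v x) = (P *\<^sub>v x) \<bullet> (A *\<^sub>v (P *\<^sub>v x))"
proof -
  have "(transpose_mat P * A * P) *\<^sub>v x = (transpose_mat P * A) *\<^sub>v (P *\<^sub>v x)"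
    using P A x by (intro assoc_mult_mat_vec[of _ n m]) auto
  also have "\<dots> = transpose_mat P *\<^sub>v (A *\<^sub>v (P *\<^sub>v x))"
    using P A x by (intro assoc_mult_mat_vec[of _ n m]) auto
  finally have "(transpose_mat P * A * P) *\<^sub>v x = transpose_mat P *\<^sub>v (A *\<^sub>v (P *\<^sub>v x))" .
  hence "x \<bullet> ((transpose_mat P * A * P) *\<^sub>v x) = (transpose_mat P *\<^sub>v (A *\<^sub>v (P *\<^sub>v x))) \<bullet> x"
    using P A x by (simp add: comm_scalar_prod[of _ n])
  also have "\<dots> = (A *\<^sub>v (P *\<^sub>v x)) \<bullet> (P *\<^sub>v x)"
    by (rule transpose_vec_mult_scalar[OF P x]) (use P A x in simp)
  finally show ?thesis using P A x by (simp add: comm_scalar_prod[of _ m])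
qed

lemma quad_form_mat_diag:
  fixes x :: "real vec"
  assumes x: "x \<in> carrier_vec n"
  shows "x \<bullet> (mat_diag n d *\<^sub>v x) = (\<Sum>j<n. d j * (x $ j)\<^sup>2)"
  using x by (simp add: mat_diag_mult_vec scalar_prod_def power2_eq_square lessThan_atLeast0 mult_ac)

lemma pd_imp_psd:
  assumes "pd_mat n A"
  shows "psd_mat n A"
  unfolding psd_mat_def
proof (intro conjI ballI)
  fix x :: "real vec" assume x: "x \<in> carrier_vec n"
  show "x \<bullet> (A *\<^sub>v x) \<ge> 0"
  proof (cases "x = 0\<^sub>v n")
    case True
    have "A \<in> carrier_mat n n" using assms by (simp add: pd_mat_def)
    thus ?thesis using True by simp
  next
    case False thus ?thesis using assms x unfolding pd_mat_def by fastforce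
  qed
qed (use assms in \<open>auto simp: pd_mat_def\<close>)

section \<open>Spectral theorem for real symmetric matrices\<close>

lemma sym_mat_index:
  assumes "S \<in> carrier_mat n n" and "sym_mat S" and "i < n" and "j < n"
  shows "S $$ (j, i) = S $$ (i, j)"
  using assms unfolding sym_mat_def by (metis carrier_matD index_transpose_mat(1))

lemma hermitian_form_real_sym_Im_zero:
  fixes S :: "real mat" and v :: "complex vec"
  assumes S: "S \<in> carrier_mat n n" and sym: "sym_mat S" and v: "v \<in> carrier_vec n"
  shows "Im (\<Sum>i<n. cnj (v $ i) * (map_mat complex_of_real S *\<^sub>v v) $ i) = 0"
proof -
  define s where "s = (\<Sum>i<n. cnj (v $ i) * (map_mat complex_of_real S *\<^sub>v v) $ i)"
  have s: "s = (\<Sum>i<n. \<Sum>j<n. cnj (v $ i) * complex_of_real (S $$ (i,j)) * v $ j)"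
    unfolding s_def using S v
    by (auto simp: mult_mat_vec_def scalar_prod_def sum_distrib_left mult.assoc intro!: sum.cong)
  have "cnj s = (\<Sum>i<n. \<Sum>j<n. v $ i * complex_of_real (S $$ (i,j)) * cnj (v $ j))"
    unfolding s by (simp add: cnj_sum)
  also have "\<dots> = (\<Sum>j<n. \<Sum>i<n. v $ i * complex_of_real (S $$ (i,j)) * cnj (v $ j))"
    by (rule sum.swap)
  also have "\<dots> = s" unfolding s
    using sym_mat_index[OF S sym] by (intro sum.cong refl) (simp add: mult_ac)
  finally show ?thesis unfolding s_def[symmetric] using complex_eq_iff[of "cnj s" s] by simp
qed

text \<open>A complex eigenvalue exists by the fundamental theorem of algebra; it is real because the
  Hermitian form of its eigenvector is.\<close>

lemma real_sym_eigenvector_exists: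
  fixes S :: "real mat"
  assumes S: "S \<in> carrier_mat n n" and sym: "sym_mat S" and n: "n > 0"
  shows "\<exists>l v. v \<in> carrier_vec n \<and> v \<noteq> 0\<^sub>v n \<and> S *\<^sub>v v = l \<cdot>\<^sub>v v"
proof -
  let ?cS = "map_mat complex_of_real S"
  have cS: "?cS \<in> carrier_mat n n" using S by simp
  obtain as where cp: "char_poly ?cS = (\<Prod>a\<leftarrow>as. [:- a, 1:])" and len: "length as = n"
    using char_poly_factorized[OF cS] by blast
  obtain a where a: "a \<in> set as" using len n by (cases as) auto
  have root: "poly (char_poly ?cS) a = 0" unfolding cp using a
    by (induct as) (auto simp: poly_prod_list)
  then obtain v where "eigenvector ?cS v a"
    using eigenvalue_root_char_poly[OF cS] unfolding eigenvalue_def by blast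
  hence v: "v \<in> carrier_vec n" "v \<noteq> 0\<^sub>v n" and Sv: "?cS *\<^sub>v v = a \<cdot>\<^sub>v v"
    unfolding eigenvector_def using cS by auto
  define w where "w = (\<Sum>i<n. (cmod (v $ i))\<^sup>2)"
  have "\<And>z. cnj z * z = complex_of_real ((cmod z)\<^sup>2)"
    by (metis complex_norm_square mult.commute)
  hence "(\<Sum>i<n. cnj (v $ i) * (?cS *\<^sub>v v) $ i) = a * complex_of_real w"
    unfolding w_def Sv using v by (auto simp: sum_distrib_left intro!: sum.cong)
  moreover obtain i where "i < n" "v $ i \<noteq> 0"
    using v by (metis vec_eq_iff carrier_vecD index_zero_vec)
  hence "w > 0" unfolding w_def by (intro sum_pos2[of _ i]) auto
  ultimately have "Im a = 0" using hermitian_form_real_sym_Im_zero[OF S sym v(1)] by simp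
  hence "a = complex_of_real (Re a)" by (simp add: complex_eq_iff)
  hence "complex_of_real (poly (char_poly S) (Re a)) = poly (char_poly ?cS) a"
    using of_real_hom.char_poly_hom[OF S] by (metis of_real_hom.poly_map_poly)
  hence "eigenvalue S (Re a)" using root eigenvalue_root_char_poly[OF S] by simp
  then obtain u where "eigenvector S u (Re a)" unfolding eigenvalue_def by blast
  thus ?thesis unfolding eigenvector_def using S by auto
qed

definition householder_mat :: "nat \<Rightarrow> real vec \<Rightarrow> real mat" where
  "householder_mat n w = mat n n (\<lambda>(i,j). (if i = j then 1 else 0) - 2 / (w \<bullet> w) * w $ i * w $ j)"

lemma householder_mat_carrier [simp]: "householder_mat n w \<in> carrier_mat n n"
  unfolding householder_mat_def by simp

lemma transpose_householder_mat [simp]: "transpose_mat (householder_mat n w) = householder_mat n w"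
  unfolding householder_mat_def by (rule eq_matI) auto

lemma householder_mat_involutive:
  assumes w: "w \<in> carrier_vec n" and w0: "w \<noteq> 0\<^sub>v n"
  shows "householder_mat n w * householder_mat n w = 1\<^sub>m n"
proof (rule eq_matI)
  define c where "c = w \<bullet> w"
  have c: "c \<noteq> 0" unfolding c_def using scalar_prod_self_pos[OF w w0] by simp
  have c_sum: "(\<Sum>k = 0..<n. w $ k * w $ k) = c" unfolding c_def scalar_prod_def using w by simp
  fix i j assume "i < dim_row (1\<^sub>m n)" "j < dim_col (1\<^sub>m n)"
  hence ij: "i < n" "j < n" by auto
  have "(householder_mat n w * householder_mat n w) $$ (i,j) =
    (\<Sum>k = 0..<n. ((if i = k then 1 else 0) - 2 / c * w $ i * w $ k) *
      ((if k = j then 1 else 0) - 2 / c * w $ k * w $ j))"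
    using ij unfolding householder_mat_def c_def[symmetric] by (simp add: scalar_prod_def)
  also have "\<dots> = (\<Sum>k = 0..<n. (if i = k then (if k = j then 1 else 0) else 0)
       - (if i = k then 2 / c * w $ k * w $ j else 0) - (if k = j then 2 / c * w $ i * w $ k else 0)
       + 4 / c\<^sup>2 * w $ i * w $ j * (w $ k * w $ k))"
    by (rule sum.cong) (auto simp: power2_eq_square algebra_simps)
  also have "\<dots> = (if i = j then 1 else 0) - 2 / c * w $ i * w $ j - 2 / c * w $ i * w $ j
      + 4 / c\<^sup>2 * w $ i * w $ j * c"
    unfolding sum.distrib sum_subtractf using ij
    by (simp add: c_sum[symmetric] sum_distrib_left)
  also have "\<dots> = 1\<^sub>m n $$ (i,j)"
    using ij c by (simp add: power2_eq_square field_simps)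
  finally show "(householder_mat n w * householder_mat n w) $$ (i,j) = 1\<^sub>m n $$ (i,j)" .
qed (auto simp: householder_mat_def)

text \<open>The reflection in the hyperplane orthogonal to \<open>u - e\<^sub>0\<close> swaps the unit vectors
  \<open>e\<^sub>0\<close> and \<open>u\<close>.\<close>

lemma orthogonal_mat_with_first_col:
  fixes u :: "real vec"
  assumes u: "u \<in> carrier_vec n" and n: "n > 0" and unit: "u \<bullet> u = 1"
  shows "\<exists>T. T \<in> carrier_mat n n \<and> transpose_mat T * T = 1\<^sub>m n \<and> col T 0 = u"
proof (cases "u = unit_vec n 0")
  case True
  thus ?thesis by (intro exI[of _ "1\<^sub>m n"]) (use n in auto)
next
  case False
  define w where "w = u - unit_vec n 0"
  have w: "w \<in> carrier_vec n" unfolding w_def using u by simp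
  have wi: "\<And>i. i < n \<Longrightarrow> w $ i = u $ i - (if i = 0 then 1 else 0)"
    unfolding w_def using u by auto
  have w0: "w \<noteq> 0\<^sub>v n"
  proof
    assume w_zero: "w = 0\<^sub>v n"
    have "u = unit_vec n 0"
    proof (rule eq_vecI)
      fix i assume "i < dim_vec (unit_vec n 0)"
      hence i: "i < n" by simp
      show "u $ i = unit_vec n 0 $ i" using wi[OF i] w_zero i by simp
    qed (use u in simp)
    thus False using False by simp
  qed
  have "w \<bullet> w = (\<Sum>k = 0..<n. w $ k * w $ k)" unfolding scalar_prod_def using w by simp
  also have "\<dots> = (\<Sum>k = 0..<n. u $ k * u $ k - 2 * (if k = 0 then u $ k else 0) + (if k = 0 then 1 else 0))"
    by (rule sum.cong) (auto simp: wi algebra_simps)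
  also have "\<dots> = 2 - 2 * u $ 0"
    using n unit u by (simp add: sum.distrib sum_subtractf sum_distrib_left[symmetric] scalar_prod_def)
  finally have ww: "w \<bullet> w = - 2 * w $ 0" using wi[OF n] by simp
  have "col (householder_mat n w) 0 = u"
  proof (rule eq_vecI)
    fix i assume "i < dim_vec u"
    hence i: "i < n" using u by simp
    have "2 / (w \<bullet> w) * w $ i * w $ 0 = - w $ i"
      using scalar_prod_self_pos[OF w w0] unfolding ww by (simp add: field_simps)
    thus "col (householder_mat n w) 0 $ i = u $ i"
      using i n wi[OF i] unfolding householder_mat_def by simp
  qed (use u in \<open>simp add: householder_mat_def\<close>)
  thus ?thesis using householder_mat_involutive[OF w w0] by (intro exI[of _ "householder_mat n w"]) simp
qed

lemma congruence_four_block_diag: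
  fixes A B Q :: "real mat"
  assumes A: "A \<in> carrier_mat k k" and B: "B \<in> carrier_mat n n" and Q: "Q \<in> carrier_mat n n"
  defines "F \<equiv> four_block_mat (1\<^sub>m k) (0\<^sub>m k n) (0\<^sub>m n k) Q"
  shows "transpose_mat F * four_block_mat A (0\<^sub>m k n) (0\<^sub>m n k) B * F =
    four_block_mat A (0\<^sub>m k n) (0\<^sub>m n k) (transpose_mat Q * B * Q)"
proof -
  have Ft: "transpose_mat F = four_block_mat (1\<^sub>m k) (0\<^sub>m k n) (0\<^sub>m n k) (transpose_mat Q)"
    unfolding F_def using Q by (subst transpose_four_block_mat) auto
  show ?thesis unfolding Ft unfolding F_def using A B Q
    by (subst mult_four_block_mat[of _ k k _ n _ n _ _ k _ n], auto,
        subst mult_four_block_mat[of _ k k _ n _ n _ _ k _ n], auto)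
qed

lemma sym_deflation:
  fixes S T :: "real mat"
  assumes S: "S \<in> carrier_mat (Suc n) (Suc n)" and sym: "sym_mat S"
    and T: "T \<in> carrier_mat (Suc n) (Suc n)" and TT: "transpose_mat T * T = 1\<^sub>m (Suc n)"
    and eigen: "S *\<^sub>v col T 0 = l \<cdot>\<^sub>v col T 0"
  shows "\<exists>S'. S' \<in> carrier_mat n n \<and> sym_mat S' \<and>
    transpose_mat T * S * T = four_block_mat (mat 1 1 (\<lambda>_. l)) (0\<^sub>m 1 n) (0\<^sub>m n 1) S'"
proof -
  define B where "B = transpose_mat T * S * T"
  have B: "B \<in> carrier_mat (Suc n) (Suc n)" unfolding B_def using T S by auto
  have symB: "sym_mat B" unfolding B_def by (rule sym_mat_congruence[OF T S sym])
  have Bi0: "B $$ (i, 0) = (if i = 0 then l else 0)" if i: "i < Suc n" for i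
  proof -
    have "B $$ (i, 0) = col T i \<bullet> (S *\<^sub>v col T 0)"
      unfolding B_def using congruence_index[OF T S i] by simp
    also have "\<dots> = l * (col T i \<bullet> col T 0)"
      unfolding eigen using T i by (simp add: scalar_prod_smult_distrib[of _ "Suc n"])
    also have "col T i \<bullet> col T 0 = (transpose_mat T * 1\<^sub>m (Suc n) * T) $$ (i, 0)"
      using congruence_index[OF T _ i, of "1\<^sub>m (Suc n)" 0] T by (simp add: carrier_vecI)
    finally show ?thesis using T TT i by simp
  qed
  have B0j: "B $$ (0, j) = (if j = 0 then l else 0)" if j: "j < Suc n" for j
    using Bi0[OF j] sym_mat_index[OF B symB j, of 0] by simp
  define S' where "S' = mat n n (\<lambda>(i,j). B $$ (Suc i, Suc j))"
  have symS': "sym_mat S'"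
    unfolding sym_mat_def S'_def using sym_mat_index[OF B symB] by (intro eq_matI) auto
  have "B = four_block_mat (mat 1 1 (\<lambda>_. l)) (0\<^sub>m 1 n) (0\<^sub>m n 1) S'"
  proof (rule eq_matI)
    fix i j assume "i < dim_row (four_block_mat (mat 1 1 (\<lambda>_. l)) (0\<^sub>m 1 n) (0\<^sub>m n 1) S')"
      "j < dim_col (four_block_mat (mat 1 1 (\<lambda>_. l)) (0\<^sub>m 1 n) (0\<^sub>m n 1) S')"
    hence ij: "i < Suc n" "j < Suc n" unfolding S'_def by auto
    show "B $$ (i, j) = four_block_mat (mat 1 1 (\<lambda>_. l)) (0\<^sub>m 1 n) (0\<^sub>m n 1) S' $$ (i, j)"
    proof (cases "i = 0 \<or> j = 0")
      case True
      thus ?thesis using ij Bi0 B0j unfolding S'_def by auto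
    next
      case False
      then obtain i' j' where "i = Suc i'" "j = Suc j'" by (metis not0_implies_Suc)
      thus ?thesis using ij unfolding S'_def by auto
    qed
  qed (use B in \<open>auto simp: S'_def\<close>)
  thus ?thesis unfolding B_def using symS' by (intro exI[of _ S']) (auto simp: S'_def)
qed

lemma real_sym_unit_eigenvector_exists:
  fixes S :: "real mat"
  assumes S: "S \<in> carrier_mat n n" and sym: "sym_mat S" and n: "n > 0"
  shows "\<exists>l u. u \<in> carrier_vec n \<and> u \<bullet> u = 1 \<and> S *\<^sub>v u = l \<cdot>\<^sub>v u"
proof -
  obtain l v where v: "v \<in> carrier_vec n" "v \<noteq> 0\<^sub>v n" and Sv: "S *\<^sub>v v = l \<cdot>\<^sub>v v"
    using real_sym_eigenvector_exists[OF S sym n] by auto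
  define u where "u = (1 / sqrt (v \<bullet> v)) \<cdot>\<^sub>v v"
  have "u \<bullet> u = 1" unfolding u_def using v scalar_prod_self_pos[OF v]
    by (simp add: smult_scalar_prod_distrib scalar_prod_smult_distrib[OF v(1)])
  moreover have "S *\<^sub>v u = l \<cdot>\<^sub>v u" unfolding u_def using S v Sv
    by (simp add: mult_mat_vec smult_smult_assoc mult.commute)
  moreover have "u \<in> carrier_vec n" unfolding u_def using v by simp
  ultimately show ?thesis by blast
qed

lemma orthogonal_mat_mult:
  fixes T F :: "real mat"
  assumes T: "T \<in> carrier_mat n n" and F: "F \<in> carrier_mat n n"
    and TT: "transpose_mat T * T = 1\<^sub>m n" and FF: "transpose_mat F * F = 1\<^sub>m n"
  shows "transpose_mat (T * F) * (T * F) = 1\<^sub>m n"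
  using congruence_mult[OF T F one_carrier_mat] T F TT FF by simp

lemma orthogonal_four_block_one:
  fixes Q :: "real mat" and k :: nat
  assumes Q: "Q \<in> carrier_mat n n" and QQ: "transpose_mat Q * Q = 1\<^sub>m n"
  defines "F \<equiv> four_block_mat (1\<^sub>m k) (0\<^sub>m k n) (0\<^sub>m n k) Q"
  shows "transpose_mat F * F = 1\<^sub>m (k + n)"
proof -
  have "F \<in> carrier_mat (k + n) (k + n)" unfolding F_def using Q by simp
  hence "transpose_mat F * F = transpose_mat F * four_block_mat (1\<^sub>m k) (0\<^sub>m k n) (0\<^sub>m n k) (1\<^sub>m n) * F"
    by (simp add: four_block_one_mat)
  also have "\<dots> = 1\<^sub>m (k + n)"
    unfolding F_def congruence_four_block_diag[OF one_carrier_mat one_carrier_mat Q]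
    using Q QQ four_block_one_mat[of k n] by simp
  finally show ?thesis .
qed

text \<open>Induction on the dimension: an orthogonal matrix with a unit eigenvector as first column
  deflates \<open>S\<close> to a symmetric matrix of one dimension less.\<close>

theorem sym_mat_orthogonal_diagonalization:
  fixes S :: "real mat"
  assumes "S \<in> carrier_mat n n" and "sym_mat S"
  shows "\<exists>Q d. Q \<in> carrier_mat n n \<and> transpose_mat Q * Q = 1\<^sub>m n \<and>
    transpose_mat Q * S * Q = mat_diag n d"
  using assms
proof (induction n arbitrary: S)
  case 0
  thus ?case by (intro exI[of _ "1\<^sub>m 0"] exI[of _ "\<lambda>_. 0"]) (auto simp: mat_diag_def intro!: eq_matI)
next
  case (Suc n)
  note S = Suc.prems(1) and sym = Suc.prems(2)
  obtain l u where u: "u \<in> carrier_vec (Suc n)" "u \<bullet> u = 1" and Su: "S *\<^sub>v u = l \<cdot>\<^sub>v u"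
    using real_sym_unit_eigenvector_exists[OF S sym] by auto
  obtain T where T: "T \<in> carrier_mat (Suc n) (Suc n)" and TT: "transpose_mat T * T = 1\<^sub>m (Suc n)"
    and T0: "col T 0 = u"
    using orthogonal_mat_with_first_col[OF u(1) _ u(2)] by auto
  obtain S' where S': "S' \<in> carrier_mat n n" "sym_mat S'"
    and TST: "transpose_mat T * S * T = four_block_mat (mat 1 1 (\<lambda>_. l)) (0\<^sub>m 1 n) (0\<^sub>m n 1) S'"
    using sym_deflation[OF S sym T TT] Su T0 by auto
  obtain Q' d' where Q': "Q' \<in> carrier_mat n n" and QQ': "transpose_mat Q' * Q' = 1\<^sub>m n"
    and QSQ': "transpose_mat Q' * S' * Q' = mat_diag n d'"
    using Suc.IH[OF S'] by auto
  define F where "F = four_block_mat (1\<^sub>m 1) (0\<^sub>m 1 n) (0\<^sub>m n 1) Q'"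
  have F: "F \<in> carrier_mat (Suc n) (Suc n)"
    unfolding F_def using four_block_carrier_mat[of "1\<^sub>m 1" 1 1 Q' n n] Q' by simp
  have "transpose_mat (T * F) * S * (T * F) = transpose_mat F * (transpose_mat T * S * T) * F"
    by (rule congruence_mult[OF T F S])
  also have "\<dots> = four_block_mat (mat 1 1 (\<lambda>_. l)) (0\<^sub>m 1 n) (0\<^sub>m n 1) (transpose_mat Q' * S' * Q')"
    unfolding TST F_def by (rule congruence_four_block_diag) (use S' Q' in auto)
  also have "\<dots> = mat_diag (Suc n) (\<lambda>i. if i = 0 then l else d' (i - 1))"
    unfolding QSQ' by (rule eq_matI) (auto simp: mat_diag_def)
  finally have "transpose_mat (T * F) * S * (T * F) = mat_diag (Suc n) (\<lambda>i. if i = 0 then l else d' (i - 1))" .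
  moreover have "transpose_mat (T * F) * (T * F) = 1\<^sub>m (Suc n)"
    using orthogonal_mat_mult[OF T F TT] orthogonal_four_block_one[OF Q' QQ', of 1] unfolding F_def by simp
  moreover have "T * F \<in> carrier_mat (Suc n) (Suc n)" using T F by simp
  ultimately show ?case by blast
qed

section \<open>Generalized eigenvalues of a definite pencil\<close>

lemma congruence_diag_pos:
  fixes P A B :: "real mat"
  assumes A: "pd_mat n A" and P: "P \<in> carrier_mat n n" and B: "B \<in> carrier_mat n n"
    and PBP: "transpose_mat P * B * P = 1\<^sub>m n" and PAP: "transpose_mat P * A * P = mat_diag n d"
    and j: "j < n"
  shows "d j > 0"
proof -
  have Ac: "A \<in> carrier_mat n n" using A unfolding pd_mat_def by simp
  have "col P j \<bullet> (B *\<^sub>v col P j) = 1" using congruence_index[OF P B j j] PBP j by simp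
  hence "col P j \<noteq> 0\<^sub>v n" using B by auto
  moreover have "col P j \<in> carrier_vec n" using P by (simp add: carrier_vecI)
  ultimately show ?thesis
    using congruence_index[OF P Ac j j] PAP A j unfolding pd_mat_def by (simp add: mat_diag_def)
qed

lemma pd_mat_congruence_one_exists:
  fixes M :: "real mat"
  assumes M: "pd_mat n M"
  shows "\<exists>P. P \<in> carrier_mat n n \<and> transpose_mat P * M * P = 1\<^sub>m n"
proof -
  have Mc: "M \<in> carrier_mat n n" and symM: "sym_mat M" using M unfolding pd_mat_def by auto
  obtain Q d where Q: "Q \<in> carrier_mat n n" and QQ: "transpose_mat Q * Q = 1\<^sub>m n"
    and QMQ: "transpose_mat Q * M * Q = mat_diag n d"
    using sym_mat_orthogonal_diagonalization[OF Mc symM] by auto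
  have "1 / sqrt (d j) * d j * (1 / sqrt (d j)) = 1" if j: "j < n" for j
    using congruence_diag_pos[OF M Q _ _ QMQ j, of "1\<^sub>m n"] QQ Q real_sqrt_mult_self[of "d j"]
    by (simp add: field_simps)
  hence "mat_diag n (\<lambda>j. 1 / sqrt (d j) * d j * (1 / sqrt (d j))) = 1\<^sub>m n"
    by (intro eq_matI) (auto simp: mat_diag_def)
  moreover have "transpose_mat (Q * mat_diag n (\<lambda>j. 1 / sqrt (d j))) * M * (Q * mat_diag n (\<lambda>j. 1 / sqrt (d j)))
    = mat_diag n (\<lambda>j. 1 / sqrt (d j) * d j * (1 / sqrt (d j)))"
    unfolding congruence_mult[OF Q mat_diag_dim Mc] QMQ by simp
  ultimately show ?thesis using Q by (intro exI[of _ "Q * mat_diag n (\<lambda>j. 1 / sqrt (d j))"]) simp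
qed

theorem simultaneous_diagonalization:
  fixes K M :: "real mat"
  assumes K: "K \<in> carrier_mat n n" and symK: "sym_mat K" and M: "pd_mat n M"
  shows "\<exists>P \<mu>. P \<in> carrier_mat n n \<and> transpose_mat P * M * P = 1\<^sub>m n \<and>
    transpose_mat P * K * P = mat_diag n \<mu>"
proof -
  have Mc: "M \<in> carrier_mat n n" using M unfolding pd_mat_def by auto
  obtain P0 where P0: "P0 \<in> carrier_mat n n" and P0M: "transpose_mat P0 * M * P0 = 1\<^sub>m n"
    using pd_mat_congruence_one_exists[OF M] by auto
  define S where "S = transpose_mat P0 * K * P0"
  have S: "S \<in> carrier_mat n n" unfolding S_def using P0 K by simp
  obtain Q \<mu> where Q: "Q \<in> carrier_mat n n" and QQ: "transpose_mat Q * Q = 1\<^sub>m n"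
    and QSQ: "transpose_mat Q * S * Q = mat_diag n \<mu>"
    using sym_mat_orthogonal_diagonalization[OF S] sym_mat_congruence[OF P0 K symK]
    unfolding S_def by auto
  have "transpose_mat (P0 * Q) * M * (P0 * Q) = 1\<^sub>m n"
    unfolding congruence_mult[OF P0 Q Mc] P0M using Q QQ by simp
  moreover have "transpose_mat (P0 * Q) * K * (P0 * Q) = mat_diag n \<mu>"
    unfolding congruence_mult[OF P0 Q K] S_def[symmetric] by (rule QSQ)
  moreover have "P0 * Q \<in> carrier_mat n n" using P0 Q by simp
  ultimately show ?thesis by blast
qed

lemma poly_gen_char_poly:
  assumes "K \<in> carrier_mat n n" and "M \<in> carrier_mat n n"
  shows "poly (gen_char_poly K M) x = det (K - x \<cdot>\<^sub>m M)"
  unfolding gen_char_poly_def by (rule poly_det_cong[of _ n]) (use assms in auto)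

lemma det_congruence:
  fixes P A :: "'a :: comm_ring_1 mat"
  assumes P: "P \<in> carrier_mat n n" and A: "A \<in> carrier_mat n n"
  shows "det (transpose_mat P * A * P) = det P * det P * det A"
  using P A by (simp add: det_mult[of _ n] det_transpose mult_ac)

lemma congruence_pencil:
  fixes P K M :: "real mat"
  assumes P: "P \<in> carrier_mat n n" and K: "K \<in> carrier_mat n n" and M: "M \<in> carrier_mat n n"
  shows "transpose_mat P * (K - x \<cdot>\<^sub>m M) * P =
    transpose_mat P * K * P - x \<cdot>\<^sub>m (transpose_mat P * M * P)"
proof -
  have Pt: "transpose_mat P \<in> carrier_mat n n" using P by simp
  have "transpose_mat P * (K - x \<cdot>\<^sub>m M) = transpose_mat P * K - x \<cdot>\<^sub>m (transpose_mat P * M)"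
    using mult_minus_distrib_mat[OF Pt K, of "x \<cdot>\<^sub>m M"] mult_smult_distrib[OF Pt M] M by simp
  thus ?thesis using Pt K M P
    by (simp add: minus_mult_distrib_mat[of _ n n] mult_smult_assoc_mat[of _ n n])
qed

lemma proots_prod_linear:
  "proots (\<Prod>i\<leftarrow>xs. [:\<mu> i, -1:]) = mset (map \<mu> xs)"
proof -
  have "[:\<mu> i, -1:] = - [:- \<mu> i, 1:]" for i by simp
  hence "proots [:\<mu> i, -1:] = {#\<mu> i#}" for i by (metis proots_uminus proots_linear_factor minus_minus)
  thus ?thesis
  proof (induction xs)
    case (Cons a xs)
    have "(\<Prod>i\<leftarrow>xs. [:\<mu> i, -1:]) \<noteq> 0" by (auto simp: prod_list_zero_iff)
    hence "proots (\<Prod>i\<leftarrow>a # xs. [:\<mu> i, -1:]) = proots [:\<mu> a, -1:] + proots (\<Prod>i\<leftarrow>xs. [:\<mu> i, -1:])"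
      by (simp only: list.map prod_list.Cons) (rule proots_mult, simp_all)
    thus ?case using Cons by simp
  qed simp
qed

lemma proots_gen_char_poly_diag:
  fixes K M P :: "real mat"
  assumes K: "K \<in> carrier_mat n n" and M: "M \<in> carrier_mat n n" and P: "P \<in> carrier_mat n n"
    and PM: "transpose_mat P * M * P = 1\<^sub>m n" and PK: "transpose_mat P * K * P = mat_diag n \<mu>"
  shows "proots (gen_char_poly K M) = mset (map \<mu> [0..<n])"
proof -
  have "det P * det P * det M = 1" using det_congruence[OF P M] PM by simp
  hence dP: "det P * det P \<noteq> 0" by auto
  define q where "q = (\<Prod>i\<leftarrow>[0..<n]. [:\<mu> i, -1:])"
  have "poly (smult (det P * det P) (gen_char_poly K M)) x = poly q x" for x
  proof -
    have "transpose_mat P * (K - x \<cdot>\<^sub>m M) * P = mat_diag n (\<lambda>i. \<mu> i - x)"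
      unfolding congruence_pencil[OF P K M] PK PM by (rule eq_matI) (auto simp: mat_diag_def)
    moreover have "K - x \<cdot>\<^sub>m M \<in> carrier_mat n n" using K M by (metis minus_carrier_mat smult_carrier_mat)
    ultimately have "det P * det P * det (K - x \<cdot>\<^sub>m M) = (\<Prod>i\<leftarrow>[0..<n]. \<mu> i - x)"
      by (metis det_congruence[OF P] det_mat_diag)
    also have "\<dots> = poly q x" unfolding q_def by (induct n) (auto simp: algebra_simps)
    finally show ?thesis using poly_gen_char_poly[OF K M] by simp
  qed
  hence "smult (det P * det P) (gen_char_poly K M) = q"
    using poly_eq_poly_eq_iff by blast
  hence "proots (gen_char_poly K M) = proots q" using dP by (metis proots_smult)
  thus ?thesis unfolding q_def proots_prod_linear .
qed

lemma gen_eig_eq_nth_sort: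
  fixes K M P :: "real mat"
  assumes "K \<in> carrier_mat n n" and "M \<in> carrier_mat n n" and "P \<in> carrier_mat n n"
    and "transpose_mat P * M * P = 1\<^sub>m n" and "transpose_mat P * K * P = mat_diag n \<mu>"
  shows "gen_eig K M i = sort (map \<mu> [0..<n]) ! (i - 1)"
  unfolding gen_eig_def proots_gen_char_poly_diag[OF assms] sorted_list_of_multiset_mset ..

section \<open>Comparison of generalized eigenvalues\<close>

lemma exists_nonzero_kernel_vec:
  fixes A :: "real mat"
  assumes A: "A \<in> carrier_mat r c" and rc: "r < c"
  shows "\<exists>z. z \<in> carrier_vec c \<and> z \<noteq> 0\<^sub>v c \<and> A *\<^sub>v z = 0\<^sub>v r"
proof -
  define C where "C = mat c c (\<lambda>(i,j). if i < r then A $$ (i,j) else 0)"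
  have C: "C \<in> carrier_mat c c" unfolding C_def by simp
  have "det C = 0" unfolding det_def'[OF C]
  proof (rule sum.neutral, intro ballI)
    fix p assume "p \<in> {p. p permutes {0..<c}}"
    hence "p (c - 1) < c" using rc by (simp add: permutes_in_image)
    hence "(\<Prod>i = 0..<c. C $$ (i, p i)) = 0"
      using rc by (intro prod_zero bexI[of _ "c - 1"]) (auto simp: C_def)
    thus "signof p * (\<Prod>i = 0..<c. C $$ (i, p i)) = 0" by simp
  qed
  then obtain z where z: "z \<in> carrier_vec c" "z \<noteq> 0\<^sub>v c" and Cz: "C *\<^sub>v z = 0\<^sub>v c"
    using det_0_iff_vec_prod_zero_field[OF C] by auto
  have "(A *\<^sub>v z) $ i = (C *\<^sub>v z) $ i" if "i < r" for i
    using that rc A z C by (auto simp: C_def scalar_prod_def row_def intro!: sum.cong)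
  hence "A *\<^sub>v z = 0\<^sub>v r" using Cz rc A by (intro eq_vecI) auto
  thus ?thesis using z by blast
qed

lemma exists_nonzero_kernel_vec_vanishing:
  fixes A :: "real mat"
  assumes A: "A \<in> carrier_mat r c" and Z: "Z \<subseteq> {..<c}" and card: "r + card Z < c"
  shows "\<exists>z. z \<in> carrier_vec c \<and> z \<noteq> 0\<^sub>v c \<and> A *\<^sub>v z = 0\<^sub>v r \<and> (\<forall>j\<in>Z. z $ j = 0)"
proof -
  have fin: "finite Z" using Z finite_subset by blast
  define zs where "zs = sorted_list_of_set Z"
  have zs: "set zs = Z" "length zs = card Z" unfolding zs_def using fin by auto
  define C where "C = mat (r + card Z) c
    (\<lambda>(i,j). if i < r then A $$ (i,j) else if j = zs ! (i - r) then 1 else 0)"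
  obtain z where z: "z \<in> carrier_vec c" "z \<noteq> 0\<^sub>v c" and Cz: "C *\<^sub>v z = 0\<^sub>v (r + card Z)"
    using exists_nonzero_kernel_vec[of C "r + card Z" c] card unfolding C_def by auto
  have Cz_row: "(C *\<^sub>v z) $ i = (\<Sum>j = 0..<c. C $$ (i,j) * z $ j)" if "i < r + card Z" for i
    using that z unfolding C_def by (auto simp: scalar_prod_def row_def intro!: sum.cong)
  have "(A *\<^sub>v z) $ i = 0" if i: "i < r" for i
  proof -
    have "(A *\<^sub>v z) $ i = (C *\<^sub>v z) $ i"
      using i A z Cz_row[of i] unfolding C_def by (auto simp: scalar_prod_def row_def intro!: sum.cong)
    thus ?thesis using Cz i by simp
  qed
  hence Az: "A *\<^sub>v z = 0\<^sub>v r" using A by (intro eq_vecI) auto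
  have "z $ j = 0" if j: "j \<in> Z" for j
  proof -
    obtain t where t: "t < card Z" and jt: "zs ! t = j" using j zs by (metis in_set_conv_nth)
    have jc: "j < c" using j Z by auto
    have "0 = (\<Sum>l = 0..<c. C $$ (r + t, l) * z $ l)" using Cz_row[of "r + t"] Cz t by simp
    also have "\<dots> = (\<Sum>l = 0..<c. if l = j then z $ l else 0)"
      using jt t by (intro sum.cong) (auto simp: C_def)
    finally show ?thesis using jc by simp
  qed
  thus ?thesis using z Az by blast
qed

lemma card_filter_compl:
  "card {j. j < n \<and> \<not> p j} = n - card {j. j < n \<and> p j}"
proof -
  have "{j. j < n \<and> \<not> p j} = {..<n} - {j. j < n \<and> p j}" by auto
  moreover have "card ({..<n} - {j. j < n \<and> p j}) = card {..<n} - card {j. j < n \<and> p j}"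
    by (rule card_Diff_subset) (auto intro: finite_subset[of _ "{..<n}"])
  ultimately show ?thesis by simp
qed

lemma exists_common_image_of_supported:
  fixes P Q :: "real mat"
  assumes P: "P \<in> carrier_mat n n" and Q: "Q \<in> carrier_mat n n"
    and card: "card {j. j < n \<and> pa j} + card {j. j < n \<and> pb j} > n"
  shows "\<exists>a b. a \<in> carrier_vec n \<and> b \<in> carrier_vec n \<and>
    (\<forall>j<n. \<not> pa j \<longrightarrow> a $ j = 0) \<and> (\<forall>j<n. \<not> pb j \<longrightarrow> b $ j = 0) \<and>
    P *\<^sub>v a = Q *\<^sub>v b \<and> (a \<noteq> 0\<^sub>v n \<or> b \<noteq> 0\<^sub>v n)"
proof -
  define C where "C = four_block_mat P (- Q) (0\<^sub>m 0 n) (0\<^sub>m 0 n)"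
  have C: "C \<in> carrier_mat n (n + n)" unfolding C_def using P Q by auto
  define ZA where "ZA = {j. j < n \<and> \<not> pa j}"
  define ZB where "ZB = {j. j < n \<and> \<not> pb j}"
  have card_le: "card {j. j < n \<and> p j} \<le> n" for p
    using card_mono[of "{..<n}" "{j. j < n \<and> p j}"] by auto
  have "ZA \<inter> (\<lambda>j. n + j) ` ZB = {}" unfolding ZA_def by auto
  hence "card (ZA \<union> (\<lambda>j. n + j) ` ZB) = card ZA + card ZB"
    unfolding ZA_def ZB_def by (subst card_Un_disjoint) (auto simp: card_image)
  also have "\<dots> = (n - card {j. j < n \<and> pa j}) + (n - card {j. j < n \<and> pb j})"
    unfolding ZA_def ZB_def card_filter_compl ..
  finally have "n + card (ZA \<union> (\<lambda>j. n + j) ` ZB) < n + n"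
    using card card_le[of pa] card_le[of pb] by arith
  moreover have "ZA \<union> (\<lambda>j. n + j) ` ZB \<subseteq> {..<n + n}" unfolding ZA_def ZB_def by auto
  ultimately obtain z where z: "z \<in> carrier_vec (n + n)" "z \<noteq> 0\<^sub>v (n + n)"
    and Cz: "C *\<^sub>v z = 0\<^sub>v n" and vanish: "\<forall>j \<in> ZA \<union> (\<lambda>j. n + j) ` ZB. z $ j = 0"
    using exists_nonzero_kernel_vec_vanishing[OF C] by blast
  define a where "a = vec_first z n"
  define b where "b = vec_last z n"
  have z_split: "z = a @\<^sub>v b" unfolding a_def b_def using z by simp
  have "(P *\<^sub>v a) $ i = (Q *\<^sub>v b) $ i" if i: "i < n" for i
  proof -
    have "0 = row C i \<bullet> z" using Cz i C by (metis index_mult_mat_vec carrier_matD(1) index_zero_vec(1))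
    also have "\<dots> = (row P i @\<^sub>v row (- Q) i) \<bullet> (a @\<^sub>v b)"
      unfolding C_def z_split using P Q i by (subst row_four_block_mat(1)) auto
    also have "\<dots> = row P i \<bullet> a + row (- Q) i \<bullet> b"
      by (rule scalar_prod_append[of _ n _ n]) (use P Q in \<open>auto simp: a_def b_def carrier_vecI\<close>)
    finally show ?thesis using P Q i by (auto simp: a_def b_def)
  qed
  hence "P *\<^sub>v a = Q *\<^sub>v b" using P Q by (intro eq_vecI) auto
  moreover have "\<forall>j<n. \<not> pa j \<longrightarrow> a $ j = 0" "\<forall>j<n. \<not> pb j \<longrightarrow> b $ j = 0"
    using vanish z unfolding a_def b_def ZA_def ZB_def vec_first_def vec_last_def by auto
  moreover have "a \<noteq> 0\<^sub>v n \<or> b \<noteq> 0\<^sub>v n" using z z_split by auto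
  ultimately show ?thesis using vec_first_carrier vec_last_carrier unfolding a_def b_def by blast
qed

lemma card_le_nth_sort:
  fixes f :: "nat \<Rightarrow> real"
  assumes "1 \<le> i" and "i \<le> n"
  shows "i \<le> card {j. j < n \<and> f j \<le> sort (map f [0..<n]) ! (i - 1)}"
proof -
  let ?s = "sort (map f [0..<n])" and ?t = "sort (map f [0..<n]) ! (i - 1)"
  have "card {j. j < n \<and> f j \<le> ?t} = length (filter (\<lambda>x. x \<le> ?t) ?s)"
    by (simp add: filter_sort length_filter_conv_card, intro arg_cong[where f = card]) auto
  also have "\<dots> = card {k. k < n \<and> ?s ! k \<le> ?t}" by (simp add: length_filter_conv_card)
  also have "i \<le> \<dots>"
    using card_mono[of "{k. k < n \<and> ?s ! k \<le> ?t}" "{..<i}"] sorted_nth_mono[of ?s] assms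
    by fastforce
  finally show ?thesis .
qed

lemma card_ge_nth_sort:
  fixes f :: "nat \<Rightarrow> real"
  assumes "1 \<le> i" and "i \<le> n"
  shows "n - i + 1 \<le> card {j. j < n \<and> sort (map f [0..<n]) ! (i - 1) \<le> f j}"
proof -
  let ?s = "sort (map f [0..<n])" and ?t = "sort (map f [0..<n]) ! (i - 1)"
  have "card {j. j < n \<and> ?t \<le> f j} = length (filter (\<lambda>x. ?t \<le> x) ?s)"
    by (simp add: filter_sort length_filter_conv_card, intro arg_cong[where f = card]) auto
  also have "\<dots> = card {k. k < n \<and> ?t \<le> ?s ! k}" by (simp add: length_filter_conv_card)
  also have "n - i + 1 \<le> \<dots>"
    using card_mono[of "{k. k < n \<and> ?t \<le> ?s ! k}" "{i - 1..<n}"] sorted_nth_mono[of ?s] assms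
    by fastforce
  finally show ?thesis .
qed

lemma quad_form_diag_congruence:
  fixes P A :: "real mat"
  assumes P: "P \<in> carrier_mat n n" and A: "A \<in> carrier_mat n n"
    and PAP: "transpose_mat P * A * P = mat_diag n d" and a: "a \<in> carrier_vec n"
  shows "(P *\<^sub>v a) \<bullet> (A *\<^sub>v (P *\<^sub>v a)) = (\<Sum>j<n. d j * (a $ j)\<^sup>2)"
  using quad_form_congruence[OF P A a] PAP quad_form_mat_diag[OF a] by simp

lemma quad_form_le_of_support:
  fixes P A B :: "real mat"
  assumes P: "P \<in> carrier_mat n n" and A: "A \<in> carrier_mat n n" and B: "B \<in> carrier_mat n n"
    and PAP: "transpose_mat P * A * P = mat_diag n d" and PBP: "transpose_mat P * B * P = 1\<^sub>m n"
    and a: "a \<in> carrier_vec n" and supp: "\<forall>j<n. \<not> d j \<le> t \<longrightarrow> a $ j = 0"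
  shows "(P *\<^sub>v a) \<bullet> (A *\<^sub>v (P *\<^sub>v a)) \<le> t * ((P *\<^sub>v a) \<bullet> (B *\<^sub>v (P *\<^sub>v a)))"
proof -
  have "(\<Sum>j<n. d j * (a $ j)\<^sup>2) \<le> (\<Sum>j<n. t * (a $ j)\<^sup>2)"
    using supp by (intro sum_mono) (metis lessThan_iff mult_right_mono nle_le power_zero_numeral
      mult_zero_right zero_le_power2)
  thus ?thesis using quad_form_diag_congruence[OF P A PAP a]
    quad_form_diag_congruence[OF P B _ a, of "\<lambda>_. 1"] PBP by (simp add: sum_distrib_left)
qed

lemma quad_form_ge_of_support:
  fixes P A B :: "real mat"
  assumes P: "P \<in> carrier_mat n n" and A: "A \<in> carrier_mat n n" and B: "B \<in> carrier_mat n n"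
    and PAP: "transpose_mat P * A * P = mat_diag n d" and PBP: "transpose_mat P * B * P = 1\<^sub>m n"
    and a: "a \<in> carrier_vec n" and supp: "\<forall>j<n. \<not> t \<le> d j \<longrightarrow> a $ j = 0"
  shows "t * ((P *\<^sub>v a) \<bullet> (B *\<^sub>v (P *\<^sub>v a))) \<le> (P *\<^sub>v a) \<bullet> (A *\<^sub>v (P *\<^sub>v a))"
proof -
  have "(\<Sum>j<n. t * (a $ j)\<^sup>2) \<le> (\<Sum>j<n. d j * (a $ j)\<^sup>2)"
    using supp by (intro sum_mono) (metis lessThan_iff mult_right_mono nle_le power_zero_numeral
      mult_zero_right zero_le_power2)
  thus ?thesis using quad_form_diag_congruence[OF P A PAP a]
    quad_form_diag_congruence[OF P B _ a, of "\<lambda>_. 1"] PBP by (simp add: sum_distrib_left)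
qed

lemma mult_vec_eq_zero_of_congruence_one:
  fixes R B :: "real mat"
  assumes R: "R \<in> carrier_mat n n" and B: "B \<in> carrier_mat n n" and v: "v \<in> carrier_vec n"
    and RBR: "transpose_mat R * B * R = 1\<^sub>m n" and Rv: "R *\<^sub>v v = 0\<^sub>v n"
  shows "v = 0\<^sub>v n"
proof -
  have "v = (transpose_mat R * B * R) *\<^sub>v v" unfolding RBR using v by simp
  also have "\<dots> = (transpose_mat R * B) *\<^sub>v (R *\<^sub>v v)"
    using R B v by (intro assoc_mult_mat_vec[of _ n n]) auto
  also have "\<dots> = 0\<^sub>v n" unfolding Rv using R B by (intro eq_vecI) (auto simp: scalar_prod_def)
  finally show ?thesis .
qed

lemma gen_eig_pos:
  fixes K M :: "real mat"
  assumes K: "pd_mat n K" and M: "pd_mat n M" and i: "1 \<le> i" "i \<le> n"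
  shows "gen_eig K M i > 0"
proof -
  have Kc: "K \<in> carrier_mat n n" and Mc: "M \<in> carrier_mat n n"
    using K M unfolding pd_mat_def by auto
  obtain P \<mu> where P: "P \<in> carrier_mat n n" and PM: "transpose_mat P * M * P = 1\<^sub>m n"
    and PK: "transpose_mat P * K * P = mat_diag n \<mu>"
    using simultaneous_diagonalization[OF Kc _ M] K unfolding pd_mat_def by auto
  have "gen_eig K M i \<in> set (sort (map \<mu> [0..<n]))"
    unfolding gen_eig_eq_nth_sort[OF Kc Mc P PM PK] using i by (intro nth_mem) simp
  then obtain j where j: "j < n" and "gen_eig K M i = \<mu> j" by auto
  thus ?thesis using congruence_diag_pos[OF K P Mc PM PK j] by simp
qed

text \<open>Courant--Fischer in the form needed here: the span of the first \<open>i\<close> eigenvectors of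
  \<open>(K, M\<^sub>1)\<close> and that of the last \<open>n - i + 1\<close> eigenvectors of \<open>(K, M\<^sub>2)\<close> meet in a
  nonzero vector, whose Rayleigh quotients are compared.\<close>

theorem gen_eig_mono:
  fixes K M1 M2 :: "real mat"
  assumes K: "pd_mat n K" and M1: "pd_mat n M1" and M2: "pd_mat n M2"
    and quad: "\<And>x. x \<in> carrier_vec n \<Longrightarrow> x \<bullet> (M1 *\<^sub>v x) \<le> c * (x \<bullet> (M2 *\<^sub>v x))"
    and i: "1 \<le> i" "i \<le> n"
  shows "gen_eig K M2 i \<le> c * gen_eig K M1 i"
proof -
  have Kc: "K \<in> carrier_mat n n" and symK: "sym_mat K" and M1c: "M1 \<in> carrier_mat n n"
    and M2c: "M2 \<in> carrier_mat n n" using K M1 M2 unfolding pd_mat_def by auto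
  obtain P \<mu> where P: "P \<in> carrier_mat n n" and PM: "transpose_mat P * M1 * P = 1\<^sub>m n"
    and PK: "transpose_mat P * K * P = mat_diag n \<mu>"
    using simultaneous_diagonalization[OF Kc symK M1] by auto
  obtain Q \<nu> where Q: "Q \<in> carrier_mat n n" and QM: "transpose_mat Q * M2 * Q = 1\<^sub>m n"
    and QK: "transpose_mat Q * K * Q = mat_diag n \<nu>"
    using simultaneous_diagonalization[OF Kc symK M2] by auto
  define t1 where "t1 = gen_eig K M1 i"
  define t2 where "t2 = gen_eig K M2 i"
  have t1: "t1 = sort (map \<mu> [0..<n]) ! (i - 1)" unfolding t1_def by (rule gen_eig_eq_nth_sort[OF Kc M1c P PM PK])
  have t2: "t2 = sort (map \<nu> [0..<n]) ! (i - 1)" unfolding t2_def by (rule gen_eig_eq_nth_sort[OF Kc M2c Q QM QK])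
  have "card {j. j < n \<and> \<mu> j \<le> t1} + card {j. j < n \<and> t2 \<le> \<nu> j} > n"
    using card_le_nth_sort[OF i, of \<mu>] card_ge_nth_sort[OF i, of \<nu>] i unfolding t1 t2 by linarith
  from exists_common_image_of_supported[OF P Q this] obtain a b where a: "a \<in> carrier_vec n" and b: "b \<in> carrier_vec n"
    and supp_a: "\<forall>j<n. \<not> \<mu> j \<le> t1 \<longrightarrow> a $ j = 0" and supp_b: "\<forall>j<n. \<not> t2 \<le> \<nu> j \<longrightarrow> b $ j = 0"
    and PQ: "P *\<^sub>v a = Q *\<^sub>v b" and ab: "a \<noteq> 0\<^sub>v n \<or> b \<noteq> 0\<^sub>v n"
    by blast
  define x where "x = P *\<^sub>v a"
  have x: "x \<in> carrier_vec n" unfolding x_def using P a by simp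
  have "x \<noteq> 0\<^sub>v n"
    using ab mult_vec_eq_zero_of_congruence_one[OF P M1c a PM] mult_vec_eq_zero_of_congruence_one[OF Q M2c b QM]
    unfolding x_def PQ by auto
  hence M2pos: "x \<bullet> (M2 *\<^sub>v x) > 0" using M2 x unfolding pd_mat_def by auto
  have "t2 * (x \<bullet> (M2 *\<^sub>v x)) \<le> x \<bullet> (K *\<^sub>v x)"
    unfolding x_def PQ by (rule quad_form_ge_of_support[OF Q Kc M2c QK QM b supp_b])
  also have "\<dots> \<le> t1 * (x \<bullet> (M1 *\<^sub>v x))"
    unfolding x_def by (rule quad_form_le_of_support[OF P Kc M1c PK PM a supp_a])
  also have "\<dots> \<le> t1 * (c * (x \<bullet> (M2 *\<^sub>v x)))"
    using quad[OF x] gen_eig_pos[OF K M1 i] unfolding t1_def by (intro mult_left_mono) auto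
  finally have "t2 * (x \<bullet> (M2 *\<^sub>v x)) \<le> (c * t1) * (x \<bullet> (M2 *\<^sub>v x))" by (simp add: mult_ac)
  thus ?thesis using M2pos unfolding t1_def t2_def by simp
qed

section \<open>Element and assembled mass matrices\<close>

lemma pd_mat_mono:
  fixes A B :: "real mat"
  assumes A: "pd_mat n A" and B: "B \<in> carrier_mat n n" "sym_mat B"
    and le: "\<And>x. x \<in> carrier_vec n \<Longrightarrow> x \<bullet> (A *\<^sub>v x) \<le> x \<bullet> (B *\<^sub>v x)"
  shows "pd_mat n B"
  using A B le unfolding pd_mat_def by (auto intro: less_le_trans)

lemma sym_mat_low_rank_update:
  fixes A V :: "real mat"
  assumes A: "A \<in> carrier_mat m m" "sym_mat A" and V: "V \<in> carrier_mat m r"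
  shows "sym_mat (A + \<alpha> \<cdot>\<^sub>m (V * transpose_mat V))"
proof -
  have "sym_mat (V * transpose_mat V)"
    using sym_mat_congruence[of "transpose_mat V" r m "1\<^sub>m r"] V by (simp add: sym_mat_def)
  moreover have "transpose_mat (\<alpha> \<cdot>\<^sub>m X) = \<alpha> \<cdot>\<^sub>m transpose_mat X" for X :: "real mat"
    by (rule eq_matI) auto
  ultimately show ?thesis using A V unfolding sym_mat_def by (simp add: transpose_add)
qed

lemma quad_form_low_rank_update:
  fixes A V :: "real mat"
  assumes A: "A \<in> carrier_mat m m" and V: "V \<in> carrier_mat m r" and y: "y \<in> carrier_vec m"
  shows "y \<bullet> ((A + \<alpha> \<cdot>\<^sub>m (V * transpose_mat V)) *\<^sub>v y) =
    y \<bullet> (A *\<^sub>v y) + \<alpha> * ((transpose_mat V *\<^sub>v y) \<bullet> (transpose_mat V *\<^sub>v y))"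
proof -
  have VV: "V * transpose_mat V \<in> carrier_mat m m" using V by simp
  have "y \<bullet> ((V * transpose_mat V) *\<^sub>v y) = (transpose_mat V *\<^sub>v y) \<bullet> (transpose_mat V *\<^sub>v y)"
    using quad_form_congruence[OF _ one_carrier_mat y, of "transpose_mat V"] V y
    by (simp add: transpose_transpose)
  moreover have "(A + \<alpha> \<cdot>\<^sub>m (V * transpose_mat V)) *\<^sub>v y = A *\<^sub>v y + \<alpha> \<cdot>\<^sub>v ((V * transpose_mat V) *\<^sub>v y)"
    using A VV y by (simp add: add_mult_distrib_mat_vec[of _ m m])
      (intro eq_vecI, auto simp: smult_scalar_prod_distrib[of _ m])
  ultimately show ?thesis
    using A VV y by (simp add: scalar_prod_add_distrib[of _ m] scalar_prod_smult_distrib[of _ m])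
qed

text \<open>The \<open>A\<close>-orthogonal projection \<open>u = U c\<close> of \<open>y\<close> onto the range of \<open>U\<close> satisfies
  \<open>u\<^sup>T A y = u\<^sup>T A u = c\<^sup>T c\<close>, so \<open>0 \<le> (y - u)\<^sup>T A (y - u) = y\<^sup>T A y - c\<^sup>T c\<close>.\<close>

lemma bessel_inequality:
  fixes A U :: "real mat"
  assumes A: "psd_mat m A" and U: "U \<in> carrier_mat m r"
    and orth: "transpose_mat U * A * U = 1\<^sub>m r" and y: "y \<in> carrier_vec m"
  shows "(transpose_mat U *\<^sub>v (A *\<^sub>v y)) \<bullet> (transpose_mat U *\<^sub>v (A *\<^sub>v y)) \<le> y \<bullet> (A *\<^sub>v y)"
proof -
  have Ac: "A \<in> carrier_mat m m" and symA: "transpose_mat A = A"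
    and Apsd: "\<And>x. x \<in> carrier_vec m \<Longrightarrow> x \<bullet> (A *\<^sub>v x) \<ge> 0"
    using A unfolding psd_mat_def sym_mat_def by auto
  define c where "c = transpose_mat U *\<^sub>v (A *\<^sub>v y)"
  define u where "u = U *\<^sub>v c"
  have c: "c \<in> carrier_vec r" unfolding c_def using U Ac y by simp
  have u: "u \<in> carrier_vec m" unfolding u_def using U c by simp
  have Ay: "A *\<^sub>v y \<in> carrier_vec m" and Au: "A *\<^sub>v u \<in> carrier_vec m" using Ac y u by auto
  have uAy: "u \<bullet> (A *\<^sub>v y) = c \<bullet> c"
    using transpose_vec_mult_scalar[OF U c Ay] U c Ay unfolding u_def c_def[symmetric]
    by (simp add: comm_scalar_prod[of _ m] comm_scalar_prod[of _ r])
  have yAu: "y \<bullet> (A *\<^sub>v u) = c \<bullet> c"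
    using transpose_vec_mult_scalar[OF Ac u y] uAy symA Ay u by (simp add: comm_scalar_prod[of _ m])
  have uAu: "u \<bullet> (A *\<^sub>v u) = c \<bullet> c"
    unfolding u_def quad_form_congruence[OF U Ac c, symmetric] orth using c by simp
  have "0 \<le> (y - u) \<bullet> (A *\<^sub>v (y - u))" using Apsd y u by simp
  also have "\<dots> = y \<bullet> (A *\<^sub>v y) - y \<bullet> (A *\<^sub>v u) - (u \<bullet> (A *\<^sub>v y) - u \<bullet> (A *\<^sub>v u))"
    using y u Ay Au by (simp add: mult_minus_distrib_mat_vec[OF Ac y u] minus_scalar_prod_distrib[of _ m]
      scalar_prod_minus_distrib[of _ m])
  finally show ?thesis unfolding c_def[symmetric] yAu uAy uAu by simp
qed

lemma quad_form_mass_update_bounds: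
  fixes A U :: "real mat" and \<alpha> :: real
  assumes A: "psd_mat m A" and U: "U \<in> carrier_mat m r"
    and orth: "transpose_mat U * A * U = 1\<^sub>m r" and y: "y \<in> carrier_vec m" and \<alpha>: "\<alpha> \<ge> 0"
  defines "Ab \<equiv> A + \<alpha> \<cdot>\<^sub>m ((A * U) * transpose_mat (A * U))"
  shows "y \<bullet> (A *\<^sub>v y) \<le> y \<bullet> (Ab *\<^sub>v y)" and "y \<bullet> (Ab *\<^sub>v y) \<le> (1 + \<alpha>) * (y \<bullet> (A *\<^sub>v y))"
proof -
  have Ac: "A \<in> carrier_mat m m" and symA: "transpose_mat A = A"
    using A unfolding psd_mat_def sym_mat_def by auto
  define c where "c = transpose_mat U *\<^sub>v (A *\<^sub>v y)"
  have "transpose_mat (A * U) *\<^sub>v y = c"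
    unfolding c_def transpose_mult[OF Ac U] symA using Ac U y by (simp add: assoc_mult_mat_vec[of _ r m])
  hence Ab: "y \<bullet> (Ab *\<^sub>v y) = y \<bullet> (A *\<^sub>v y) + \<alpha> * (c \<bullet> c)"
    unfolding Ab_def using quad_form_low_rank_update[OF Ac _ y, of "A * U" r] Ac U by simp
  have "c \<bullet> c \<ge> 0" unfolding scalar_prod_def by (auto intro: sum_nonneg)
  moreover have "c \<bullet> c \<le> y \<bullet> (A *\<^sub>v y)" unfolding c_def by (rule bessel_inequality[OF A U orth y])
  ultimately show "y \<bullet> (A *\<^sub>v y) \<le> y \<bullet> (Ab *\<^sub>v y)" "y \<bullet> (Ab *\<^sub>v y) \<le> (1 + \<alpha>) * (y \<bullet> (A *\<^sub>v y))"
    unfolding Ab using \<alpha> by (auto simp: algebra_simps intro: mult_left_mono)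
qed

lemma assemble_carrier [simp]: "assemble n N L A \<in> carrier_mat n n"
  unfolding assemble_def by simp

lemma quad_form_expand:
  fixes B :: "real mat"
  assumes "B \<in> carrier_mat n n" and "x \<in> carrier_vec n"
  shows "x \<bullet> (B *\<^sub>v x) = (\<Sum>i<n. \<Sum>j<n. x $ i * B $$ (i,j) * x $ j)"
  using assms by (auto simp: scalar_prod_def mult_mat_vec_def row_def sum_distrib_left mult.assoc
    lessThan_atLeast0 intro!: sum.cong)

lemma quad_form_assemble:
  fixes L A :: "nat \<Rightarrow> real mat"
  assumes L: "\<And>e. e < N \<Longrightarrow> L e \<in> carrier_mat m n" and A: "\<And>e. e < N \<Longrightarrow> A e \<in> carrier_mat m m"
    and x: "x \<in> carrier_vec n"
  shows "x \<bullet> (assemble n N L A *\<^sub>v x) = (\<Sum>e<N. (L e *\<^sub>v x) \<bullet> (A e *\<^sub>v (L e *\<^sub>v x)))"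
proof -
  let ?B = "\<lambda>e. transpose_mat (L e) * A e * L e"
  have "x \<bullet> (assemble n N L A *\<^sub>v x) = (\<Sum>i<n. \<Sum>j<n. \<Sum>e<N. x $ i * ?B e $$ (i,j) * x $ j)"
    by (simp add: quad_form_expand[OF _ x] assemble_def sum_distrib_left sum_distrib_right)
  also have "\<dots> = (\<Sum>e<N. \<Sum>i<n. \<Sum>j<n. x $ i * ?B e $$ (i,j) * x $ j)"
    by (simp add: sum.swap[of _ "{..<n}" "{..<N}"] sum.swap[of _ "{..<n}" "{..<N}"])
  also have "\<dots> = (\<Sum>e<N. (L e *\<^sub>v x) \<bullet> (A e *\<^sub>v (L e *\<^sub>v x)))"
  proof (rule sum.cong[OF refl])
    fix e assume "e \<in> {..<N}"
    hence e: "e < N" by simp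
    have "?B e \<in> carrier_mat n n" using L[OF e] A[OF e] by simp
    thus "(\<Sum>i<n. \<Sum>j<n. x $ i * ?B e $$ (i,j) * x $ j) = (L e *\<^sub>v x) \<bullet> (A e *\<^sub>v (L e *\<^sub>v x))"
      using quad_form_expand[OF _ x] quad_form_congruence[OF L[OF e] A[OF e] x] by simp
  qed
  finally show ?thesis .
qed

lemma quad_form_assemble_mono:
  fixes L A B :: "nat \<Rightarrow> real mat"
  assumes L: "\<And>e. e < N \<Longrightarrow> L e \<in> carrier_mat m n"
    and A: "\<And>e. e < N \<Longrightarrow> A e \<in> carrier_mat m m" and B: "\<And>e. e < N \<Longrightarrow> B e \<in> carrier_mat m m"
    and le: "\<And>e y. e < N \<Longrightarrow> y \<in> carrier_vec m \<Longrightarrow> y \<bullet> (A e *\<^sub>v y) \<le> c * (y \<bullet> (B e *\<^sub>v y))"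
    and x: "x \<in> carrier_vec n"
  shows "x \<bullet> (assemble n N L A *\<^sub>v x) \<le> c * (x \<bullet> (assemble n N L B *\<^sub>v x))"
proof -
  have "(L e *\<^sub>v x) \<bullet> (A e *\<^sub>v (L e *\<^sub>v x)) \<le> c * ((L e *\<^sub>v x) \<bullet> (B e *\<^sub>v (L e *\<^sub>v x)))"
    if "e \<in> {..<N}" for e
    using that L[of e] x by (intro le) (auto simp: mult_mat_vec_carrier)
  hence "(\<Sum>e<N. (L e *\<^sub>v x) \<bullet> (A e *\<^sub>v (L e *\<^sub>v x))) \<le>
    c * (\<Sum>e<N. (L e *\<^sub>v x) \<bullet> (B e *\<^sub>v (L e *\<^sub>v x)))"
    unfolding sum_distrib_left by (rule sum_mono)
  thus ?thesis using quad_form_assemble[OF L A x] quad_form_assemble[OF L B x] by simp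
qed

lemma sym_assemble:
  fixes L A :: "nat \<Rightarrow> real mat"
  assumes L: "\<And>e. e < N \<Longrightarrow> L e \<in> carrier_mat m n" and A: "\<And>e. e < N \<Longrightarrow> A e \<in> carrier_mat m m"
    and sym: "\<And>e. e < N \<Longrightarrow> sym_mat (A e)"
  shows "sym_mat (assemble n N L A)"
  unfolding sym_mat_def
proof (rule eq_matI)
  fix i j assume "i < dim_row (assemble n N L A)" "j < dim_col (assemble n N L A)"
  hence ij: "i < n" "j < n" by (auto simp: assemble_def)
  have "(transpose_mat (L e) * A e * L e) $$ (j,i) = (transpose_mat (L e) * A e * L e) $$ (i,j)"
    if e: "e < N" for e
    using sym_mat_index[OF _ sym_mat_congruence[OF L[OF e] A[OF e] sym[OF e]] ij] L[OF e] A[OF e]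
    by simp
  thus "transpose_mat (assemble n N L A) $$ (i, j) = assemble n N L A $$ (i, j)"
    using ij by (simp add: assemble_def)
qed (auto simp: assemble_def)

lemma restr_mat_mult_vec_index:
  fixes x :: "real vec"
  assumes idx: "\<And>a. a < m \<Longrightarrow> idx a < n" and x: "x \<in> carrier_vec n" and a: "a < m"
  shows "(restr_mat m n idx *\<^sub>v x) $ a = x $ idx a"
proof -
  have "(restr_mat m n idx *\<^sub>v x) $ a = (\<Sum>b = 0..<n. (if b = idx a then 1 else 0) * x $ b)"
    using a x unfolding restr_mat_def by (auto simp: scalar_prod_def)
  also have "\<dots> = (\<Sum>b = 0..<n. if b = idx a then x $ b else 0)" by (rule sum.cong) auto
  finally show ?thesis using idx[OF a] by simp
qed

lemma pd_assemble_restr: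
  fixes A :: "nat \<Rightarrow> real mat"
  assumes idx_range: "\<And>e a. e < N \<Longrightarrow> a < m \<Longrightarrow> idx e a < n"
    and idx_cover: "\<And>i. i < n \<Longrightarrow> \<exists>e<N. \<exists>a<m. idx e a = i"
    and A: "\<And>e. e < N \<Longrightarrow> pd_mat m (A e)"
  shows "pd_mat n (assemble n N (\<lambda>e. restr_mat m n (idx e)) A)"
proof -
  let ?L = "\<lambda>e. restr_mat m n (idx e)"
  have L: "?L e \<in> carrier_mat m n" for e unfolding restr_mat_def by simp
  have Ac: "A e \<in> carrier_mat m m" "sym_mat (A e)" if "e < N" for e
    using A[OF that] unfolding pd_mat_def by auto
  have pos: "x \<bullet> (assemble n N ?L A *\<^sub>v x) > 0" if x: "x \<in> carrier_vec n" "x \<noteq> 0\<^sub>v n" for x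
  proof -
    obtain i where i: "i < n" and xi: "x $ i \<noteq> 0"
      using x by (metis eq_vecI carrier_vecD index_zero_vec)
    obtain e a where e: "e < N" and a: "a < m" and ea: "idx e a = i" using idx_cover[OF i] by blast
    have "(?L e *\<^sub>v x) $ a \<noteq> 0"
      using restr_mat_mult_vec_index[OF idx_range[OF e] x(1) a] xi ea by simp
    hence "?L e *\<^sub>v x \<noteq> 0\<^sub>v m" using a by auto
    hence "(?L e *\<^sub>v x) \<bullet> (A e *\<^sub>v (?L e *\<^sub>v x)) > 0"
      using A[OF e] L[of e] x unfolding pd_mat_def by auto
    moreover have "(?L e' *\<^sub>v x) \<bullet> (A e' *\<^sub>v (?L e' *\<^sub>v x)) \<ge> 0" if "e' < N" for e'
      using pd_imp_psd[OF A[OF that]] L[of e'] x unfolding psd_mat_def by auto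
    ultimately have "(\<Sum>e<N. (?L e *\<^sub>v x) \<bullet> (A e *\<^sub>v (?L e *\<^sub>v x))) > 0"
      by (intro sum_pos2[of _ e]) (use e in auto)
    thus ?thesis using quad_form_assemble[of N ?L m n A x] L Ac(1) x(1) by simp
  qed
  show ?thesis unfolding pd_mat_def using sym_assemble[OF L Ac] pos by auto
qed

lemma sqrt_ratio_bounds:
  fixes a b c :: real
  assumes "0 < b" and "b \<le> a" and "a \<le> c * b"
  shows "1 \<le> sqrt a / sqrt b \<and> sqrt a / sqrt b \<le> sqrt c"
proof -
  have "sqrt b \<le> sqrt a" "sqrt a \<le> sqrt c * sqrt b" "sqrt b > 0"
    using assms by (simp_all flip: real_sqrt_mult)
  thus ?thesis by (simp add: divide_simps)
qed

theorem mainTheorem3: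
  fixes n m N r :: nat and \<alpha> :: real
    and idx :: "nat \<Rightarrow> nat \<Rightarrow> nat"
    and Ke Me U :: "nat \<Rightarrow> real mat"
  defines "L \<equiv> (\<lambda>e. restr_mat m n (idx e))"
  defines "V \<equiv> (\<lambda>e. Me e * U e)"
  defines "Mbar_e \<equiv> (\<lambda>e. Me e + \<alpha> \<cdot>\<^sub>m (V e * transpose_mat (V e)))"
  defines "K \<equiv> assemble n N L Ke"
  defines "M \<equiv> assemble n N L Me"
  defines "Mbar \<equiv> assemble n N L Mbar_e"
  assumes idx_inj: "\<And>e. e < N \<Longrightarrow> inj_on (idx e) {..<m}"
    and idx_range: "\<And>e a. e < N \<Longrightarrow> a < m \<Longrightarrow> idx e a < n"
    and idx_cover: "\<And>i. i < n \<Longrightarrow> \<exists>e<N. \<exists>a<m. idx e a = i"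
    and Ke_psd: "\<And>e. e < N \<Longrightarrow> psd_mat m (Ke e)"
    and K_pd: "pd_mat n K"
    and Me_pd: "\<And>e. e < N \<Longrightarrow> pd_mat m (Me e)"
    and r_pos: "0 < r" and r_lt: "r < m"
    and alpha_pos: "\<alpha> > 0"
    and U_carrier: "\<And>e. e < N \<Longrightarrow> U e \<in> carrier_mat m r"
    and U_orth: "\<And>e. e < N \<Longrightarrow> transpose_mat (U e) * Me e * U e = 1\<^sub>m r"
    and U_eig: "\<And>e j. e < N \<Longrightarrow> j < r \<Longrightarrow>
        Ke e *\<^sub>v col (U e) j = gen_eig (Ke e) (Me e) (m - r + 1 + j) \<cdot>\<^sub>v (Me e *\<^sub>v col (U e) j)"
  shows "\<forall>i \<in> {1..n}.
     1 \<le> sqrt (gen_eig K M i) / sqrt (gen_eig K Mbar i) \<and>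
     sqrt (gen_eig K M i) / sqrt (gen_eig K Mbar i) \<le> sqrt (1 + \<alpha>)"
proof -
  have L: "L e \<in> carrier_mat m n" for e unfolding L_def restr_mat_def by simp
  have Me: "Me e \<in> carrier_mat m m" "sym_mat (Me e)" if "e < N" for e
    using Me_pd[OF that] unfolding pd_mat_def by auto
  have Mbar_e: "Mbar_e e \<in> carrier_mat m m" "sym_mat (Mbar_e e)" if "e < N" for e
    unfolding Mbar_e_def V_def using Me[OF that] U_carrier[OF that]
    by (auto intro!: sym_mat_low_rank_update)
  note element_bounds = quad_form_mass_update_bounds[OF pd_imp_psd[OF Me_pd] U_carrier U_orth _
    less_imp_le[OF alpha_pos]]
  have lower: "x \<bullet> (M *\<^sub>v x) \<le> 1 * (x \<bullet> (Mbar *\<^sub>v x))" if "x \<in> carrier_vec n" for x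
    unfolding M_def Mbar_def using element_bounds(1) Me(1) Mbar_e(1) L that
    by (intro quad_form_assemble_mono) (auto simp: Mbar_e_def V_def)
  have upper: "x \<bullet> (Mbar *\<^sub>v x) \<le> (1 + \<alpha>) * (x \<bullet> (M *\<^sub>v x))" if "x \<in> carrier_vec n" for x
    unfolding M_def Mbar_def using element_bounds(2) Me(1) Mbar_e(1) L that
    by (intro quad_form_assemble_mono) (auto simp: Mbar_e_def V_def)
  have M_pd: "pd_mat n M"
    unfolding M_def L_def by (rule pd_assemble_restr[OF idx_range idx_cover Me_pd])
  have Mbar_pd: "pd_mat n Mbar"
    using pd_mat_mono[OF M_pd _ sym_assemble[OF L Mbar_e]] lower unfolding Mbar_def by simp
  show ?thesis
  proof
    fix i assume "i \<in> {1..n}"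
    hence i: "1 \<le> i" "i \<le> n" by auto
    show "1 \<le> sqrt (gen_eig K M i) / sqrt (gen_eig K Mbar i) \<and>
      sqrt (gen_eig K M i) / sqrt (gen_eig K Mbar i) \<le> sqrt (1 + \<alpha>)"
      using gen_eig_pos[OF K_pd Mbar_pd i] gen_eig_mono[OF K_pd M_pd Mbar_pd lower i]
        gen_eig_mono[OF K_pd Mbar_pd M_pd upper i]
      by (intro sqrt_ratio_bounds) auto
  qed
qed

end
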